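(* Let $p$ be a prime, $r\ge1$, and let $L$ be an even $\mathbb Z_p$-lattice which splits off $r$ hyperbolic planes, i.e. $L=U^r\oplus\tilde L$ for a hyperbolic plane $U$ over $\mathbb Z_p$ and an even $\mathbb Z_p$-lattice $\tilde L$. Let $\gamma\in D_L^r$ and let $M$ be a $\mathbb Z_p$-lattice with basis $(e_i)_{i=1,\dots,r}$ whose moment matrix $q((e_i)_i)$ lies in the class $q(\gamma)+\Lambda_r(\mathbb Z_p)$. Then there exists an isometric embedding $\phi:M\to L'$ with $(\phi(e_i))_{i=1,\dots,r}\in\gamma+L^r$.
   Context: A $\mathbb Z_p$-lattice is a free $\mathbb Z_p$-module of finite rank with a nondegenerate $\mathbb Q_p$-valued quadratic form $q$ and bilinear form $(x,y)=q(x+y)-q(x)-q(y)$; even means $q(L)\subseteq\mathbb Z_p$. $L'$ is the dual lattice and $D_L=L'/L$. A hyperbolic plane over $\mathbb Z_p$ has a basis $f,f'$ with $q(f)=q(f')=0$, $(f,f')=1$. For an $r$-tuple $\mathbf x=(x_1,\dots,x_r)$ its moment matrix is $q(\mathbf x)=\big((x_i,x_j)/2\big)_{i,j}$. $\Lambda_r(\mathbb Z_p)$ is the set of symmetric $r\times r$ matrices with diagonal entries in $\mathbb Z_p$ and off-diagonal entries in $\frac12\mathbb Z_p$; for $\gamma\in D_L^r$ the class $q(\gamma)+\Lambda_r(\mathbb Z_p)$ is $q(\tilde\gamma)+\Lambda_r(\mathbb Z_p)$ for any representative $\tilde\gamma\in L'^r$ (independent of the representative). *)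

theory Defs
  imports "HOL-Computational_Algebra.Primes"
begin

text \<open>A field K with a map v (the valuation; its value at 0 is irrelevant)
is Q_p iff v is a discrete valuation with v(p) = 1, residue field with p
elements (every integral element is congruent to one of 0,...,p-1), and K is
complete for v.\<close>

definition padic_field :: "nat \<Rightarrow> ('a::field \<Rightarrow> int) \<Rightarrow> bool" where
  "padic_field p v \<longleftrightarrow>
     prime p \<and> (of_nat p :: 'a) \<noteq> 0 \<and> v (of_nat p) = 1 \<and>
     (\<forall>x y. x \<noteq> 0 \<longrightarrow> y \<noteq> 0 \<longrightarrow> v (x * y) = v x + v y) \<and>
     (\<forall>x y. x \<noteq> 0 \<longrightarrow> y \<noteq> 0 \<longrightarrow> x + y \<noteq> 0 \<longrightarrow> min (v x) (v y) \<le> v (x + y)) \<and>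
     (\<forall>x. x \<noteq> 0 \<longrightarrow> 0 \<le> v x \<longrightarrow>
        (\<exists>k<p. x = of_nat k \<or> (x - of_nat k \<noteq> 0 \<and> 1 \<le> v (x - of_nat k)))) \<and>
     (\<forall>s :: nat \<Rightarrow> 'a.
        (\<forall>N::int. \<exists>M. \<forall>m\<ge>M. \<forall>n\<ge>M. s m = s n \<or> N \<le> v (s m - s n)) \<longrightarrow>
        (\<exists>l. \<forall>N::int. \<exists>M. \<forall>n\<ge>M. s n = l \<or> N \<le> v (s n - l)))"

definition Zp :: "('a::field \<Rightarrow> int) \<Rightarrow> 'a set" where
  "Zp v = {x. x = 0 \<or> 0 \<le> v x}"

definition vector_space_over :: "('a::field \<Rightarrow> 'v::ab_group_add \<Rightarrow> 'v) \<Rightarrow> bool" where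
  "vector_space_over sc \<longleftrightarrow>
     (\<forall>a x y. sc a (x + y) = sc a x + sc a y) \<and>
     (\<forall>a b x. sc (a + b) x = sc a x + sc b x) \<and>
     (\<forall>a b x. sc a (sc b x) = sc (a * b) x) \<and>
     (\<forall>x. sc 1 x = x)"

definition bil :: "('v::ab_group_add \<Rightarrow> 'a::field) \<Rightarrow> 'v \<Rightarrow> 'v \<Rightarrow> 'a" where
  "bil q x y = q (x + y) - q x - q y"

definition quadratic_form :: "('a::field \<Rightarrow> 'v::ab_group_add \<Rightarrow> 'v) \<Rightarrow> ('v \<Rightarrow> 'a) \<Rightarrow> bool" where
  "quadratic_form sc q \<longleftrightarrow>
     (\<forall>a x. q (sc a x) = a * a * q x) \<and>
     (\<forall>x y z. bil q (x + y) z = bil q x z + bil q y z) \<and>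
     (\<forall>a x y. bil q (sc a x) y = a * bil q x y)"

definition moment :: "('v::ab_group_add \<Rightarrow> 'a::field) \<Rightarrow> (nat \<Rightarrow> 'v) \<Rightarrow> nat \<Rightarrow> nat \<Rightarrow> 'a" where
  "moment q x i j = bil q (x i) (x j) / 2"

definition Qspan :: "('a::field \<Rightarrow> 'v::ab_group_add \<Rightarrow> 'v) \<Rightarrow> (nat \<Rightarrow> 'v) \<Rightarrow> nat \<Rightarrow> 'v set" where
  "Qspan sc b n = {(\<Sum>i<n. sc (a i) (b i)) | a. True}"

definition Zspan :: "('a::field \<Rightarrow> int) \<Rightarrow> ('a \<Rightarrow> 'v::ab_group_add \<Rightarrow> 'v) \<Rightarrow> (nat \<Rightarrow> 'v) \<Rightarrow> nat \<Rightarrow> 'v set" where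
  "Zspan v sc b n = {(\<Sum>i<n. sc (a i) (b i)) | a. \<forall>i<n. a i \<in> Zp v}"

text \<open>A Z_p-lattice of rank n, given by a basis b_0..b_{n-1}: the Z_p-span of a
Q_p-linearly independent family, with nondegenerate form (on L tensor Q_p = Qspan).\<close>
definition is_lattice :: "('a::field \<Rightarrow> int) \<Rightarrow> ('a \<Rightarrow> 'v::ab_group_add \<Rightarrow> 'v) \<Rightarrow> ('v \<Rightarrow> 'a)
    \<Rightarrow> (nat \<Rightarrow> 'v) \<Rightarrow> nat \<Rightarrow> bool" where
  "is_lattice v sc q b n \<longleftrightarrow>
     (\<forall>a. (\<Sum>i<n. sc (a i) (b i)) = 0 \<longrightarrow> (\<forall>i<n. a i = 0)) \<and>
     (\<forall>x\<in>Qspan sc b n. (\<forall>y\<in>Qspan sc b n. bil q x y = 0) \<longrightarrow> x = 0)"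

definition even_lattice :: "('a::field \<Rightarrow> int) \<Rightarrow> ('a \<Rightarrow> 'v::ab_group_add \<Rightarrow> 'v) \<Rightarrow> ('v \<Rightarrow> 'a)
    \<Rightarrow> (nat \<Rightarrow> 'v) \<Rightarrow> nat \<Rightarrow> bool" where
  "even_lattice v sc q b n \<longleftrightarrow> (\<forall>x\<in>Zspan v sc b n. q x \<in> Zp v)"

definition dual_lattice :: "('a::field \<Rightarrow> int) \<Rightarrow> ('a \<Rightarrow> 'v::ab_group_add \<Rightarrow> 'v) \<Rightarrow> ('v \<Rightarrow> 'a)
    \<Rightarrow> (nat \<Rightarrow> 'v) \<Rightarrow> nat \<Rightarrow> 'v set" where
  "dual_lattice v sc q b n = {x \<in> Qspan sc b n. \<forall>y\<in>Zspan v sc b n. bil q x y \<in> Zp v}"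

text \<open>Basis of U^r (+) Ltilde: f_0..f_{r-1}, f'_0..f'_{r-1}, c_0..c_{m-1}.\<close>
definition hypfam :: "nat \<Rightarrow> (nat \<Rightarrow> 'v) \<Rightarrow> (nat \<Rightarrow> 'v) \<Rightarrow> (nat \<Rightarrow> 'v) \<Rightarrow> nat \<Rightarrow> 'v" where
  "hypfam r f f' c i = (if i < r then f i else if i < 2 * r then f' (i - r) else c (i - 2 * r))"

definition hyperbolic_frame :: "('v::ab_group_add \<Rightarrow> 'a::field) \<Rightarrow> nat \<Rightarrow> (nat \<Rightarrow> 'v) \<Rightarrow> (nat \<Rightarrow> 'v)
    \<Rightarrow> (nat \<Rightarrow> 'v) \<Rightarrow> nat \<Rightarrow> bool" where
  "hyperbolic_frame q r f f' c m \<longleftrightarrow>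
     (\<forall>i<r. q (f i) = 0 \<and> q (f' i) = 0) \<and>
     (\<forall>i<r. \<forall>j<r. bil q (f i) (f j) = 0 \<and> bil q (f' i) (f' j) = 0 \<and>
                  bil q (f i) (f' j) = (if i = j then 1 else 0)) \<and>
     (\<forall>i<r. \<forall>k<m. bil q (f i) (c k) = 0 \<and> bil q (f' i) (c k) = 0)"

definition in_Lambda :: "('a::field \<Rightarrow> int) \<Rightarrow> nat \<Rightarrow> (nat \<Rightarrow> nat \<Rightarrow> 'a) \<Rightarrow> bool" where
  "in_Lambda v r A \<longleftrightarrow>
     (\<forall>i<r. \<forall>j<r. A i j = A j i \<and> (if i = j then A i j \<in> Zp v else 2 * A i j \<in> Zp v))"

definition isometric_embedding :: "('a::field \<Rightarrow> int)
    \<Rightarrow> ('a \<Rightarrow> 'w::ab_group_add \<Rightarrow> 'w) \<Rightarrow> ('w \<Rightarrow> 'a) \<Rightarrow> 'w set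
    \<Rightarrow> ('a \<Rightarrow> 'v::ab_group_add \<Rightarrow> 'v) \<Rightarrow> ('v \<Rightarrow> 'a) \<Rightarrow> 'v set \<Rightarrow> ('w \<Rightarrow> 'v) \<Rightarrow> bool" where
  "isometric_embedding v scM qM M scL qL T \<phi> \<longleftrightarrow>
     (\<forall>x\<in>M. \<phi> x \<in> T) \<and>
     (\<forall>x\<in>M. \<forall>y\<in>M. \<phi> (x + y) = \<phi> x + \<phi> y) \<and>
     (\<forall>a\<in>Zp v. \<forall>x\<in>M. \<phi> (scM a x) = scL a (\<phi> x)) \<and>
     inj_on \<phi> M \<and>
     (\<forall>x\<in>M. qL (\<phi> x) = qM x)"

end

theory Submission
  imports Defs "HOL.Modules"
begin

text \<open>Subtracting from each \<open>\<gamma>\<^sub>i\<close> its projection onto the span of the hyperbolic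
  planes leaves a vector \<open>h\<^sub>i\<close> orthogonal to all \<open>f\<^sub>j, f'\<^sub>j\<close>, and the projection lies
  in \<open>L\<close> because \<open>\<gamma>\<^sub>i \<in> L'\<close>.  Then \<open>u\<^sub>i = h\<^sub>i + f\<^sub>i + \<Sum>\<^sub>j b\<^sub>i\<^sub>j f'\<^sub>j\<close> has Gram matrix
  \<open>(h\<^sub>i, h\<^sub>k) + b\<^sub>i\<^sub>k + b\<^sub>k\<^sub>i\<close>.  The hypothesis \<open>q(e) \<in> q(\<gamma>) + \<Lambda>\<^sub>r\<close> then implies
  that the required correction \<open>(e\<^sub>i, e\<^sub>k) - (h\<^sub>i, h\<^sub>k)\<close> is even-integral (integral
  entries, diagonal in \<open>2\<int>\<^sub>p\<close>), so its upper half \<open>b\<close> is integral and \<open>u\<^sub>i \<equiv> \<gamma>\<^sub>i\<close>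
  mod \<open>L\<close>.  Finally \<open>e\<^sub>i \<mapsto> u\<^sub>i\<close> extends linearly to an isometric embedding of \<open>M\<close>
  into \<open>L'\<close>.\<close>

lemma vector_space_over_iff_module: "vector_space_over sc \<longleftrightarrow> module sc"
  by (auto simp: vector_space_over_def module_def)

context
  fixes sc :: "'a::field \<Rightarrow> 'v::ab_group_add \<Rightarrow> 'v"
  assumes VS: "vector_space_over sc"
begin

interpretation module sc
  using VS by (simp add: vector_space_over_iff_module)

lemma lincomb_add:
  "(\<Sum>i<n. sc (a i) (b i)) + (\<Sum>i<n. sc (c i) (b i)) = (\<Sum>i<n. sc (a i + c i) (b i))"
  by (simp add: sum.distrib[symmetric] scale_left_distrib)

lemma lincomb_diff:
  "(\<Sum>i<n. sc (a i) (b i)) - (\<Sum>i<n. sc (c i) (b i)) = (\<Sum>i<n. sc (a i - c i) (b i))"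
  by (simp add: sum_subtractf[symmetric] scale_left_diff_distrib)

lemma lincomb_scale: "sc t (\<Sum>i<n. sc (a i) (b i)) = (\<Sum>i<n. sc (t * a i) (b i))"
  by (simp add: scale_sum_right)

lemma lincomb_delta: "k < (n::nat) \<Longrightarrow> (\<Sum>i<n. sc (if i = k then 1 else 0) (b i)) = b k"
  by (simp add: if_distrib[of "\<lambda>a. sc a x" for x] cong: if_cong)

lemma lincomb_unique:
  assumes li: "\<forall>a. (\<Sum>i<n. sc (a i) (b i)) = 0 \<longrightarrow> (\<forall>i<n. a i = 0)"
    and eq: "(\<Sum>i<n. sc (a i) (b i)) = (\<Sum>i<n. sc (c i) (b i))" and i: "i < n"
  shows "a i = c i"
  using li[rule_format, of "\<lambda>i. a i - c i"] eq i by (simp add: lincomb_diff[symmetric])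

end

lemma sum_mult_delta:
  fixes c :: "nat \<Rightarrow> 'a::semiring_1"
  assumes "k < r"
  shows "(\<Sum>j<r. c j * (if k = j then 1 else 0)) = c k"
    and "(\<Sum>j<r. c j * (if j = k then 1 else 0)) = c k"
  using assms by (simp_all add: if_distrib cong: if_cong)

lemma bil_sym: "bil q x y = bil q y x"
  by (simp add: bil_def algebra_simps)

context
  fixes sc :: "'a::field \<Rightarrow> 'v::ab_group_add \<Rightarrow> 'v" and q :: "'v \<Rightarrow> 'a"
  assumes QF: "quadratic_form sc q"
begin

lemma bil_add_left: "bil q (x + y) z = bil q x z + bil q y z"
  using QF by (simp add: quadratic_form_def)

lemma bil_add_right: "bil q z (x + y) = bil q z x + bil q z y"
  using bil_add_left by (simp add: bil_sym[of q z])

lemma bil_scale_left: "bil q (sc a x) y = a * bil q x y"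
  using QF by (simp add: quadratic_form_def)

lemma bil_scale_right: "bil q y (sc a x) = a * bil q y x"
  using bil_scale_left by (simp add: bil_sym[of q y])

interpretation bil_left: additive "\<lambda>x. bil q x y" for y
  by unfold_locales (rule bil_add_left)

interpretation bil_right: additive "\<lambda>y. bil q x y" for x
  by unfold_locales (rule bil_add_right)

lemmas bil_zero_left = bil_left.zero
  and bil_diff_left = bil_left.diff
  and bil_sum_left = bil_left.sum
  and bil_diff_right = bil_right.diff
  and bil_sum_right = bil_right.sum

lemma bil_lincomb_left: "bil q (\<Sum>i<n. sc (a i) (b i)) y = (\<Sum>i<n. a i * bil q (b i) y)"
  by (simp add: bil_sum_left bil_scale_left)

lemma bil_lincomb_right: "bil q y (\<Sum>i<n. sc (a i) (b i)) = (\<Sum>i<n. a i * bil q y (b i))"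
  by (simp add: bil_sum_right bil_scale_right)

lemma quadratic_form_half_bil:
  assumes VS: "vector_space_over sc" and two: "(2::'a) \<noteq> 0"
  shows "q x = bil q x x / 2"
proof -
  interpret module sc
    using VS by (simp add: vector_space_over_iff_module)
  have "x + x = sc 2 x"
    using scale_left_distrib[of 1 1 x] by simp
  then have "q (x + x) = 4 * q x"
    using QF by (simp add: quadratic_form_def)
  then show ?thesis
    using two by (simp add: bil_def field_simps)
qed

end

context
  fixes p :: nat and v :: "'a::field \<Rightarrow> int"
  assumes Qp: "padic_field p v"
begin

lemma valuation_mult: "x \<noteq> 0 \<Longrightarrow> y \<noteq> 0 \<Longrightarrow> v (x * y) = v x + v y"
  using Qp by (simp add: padic_field_def)

lemma valuation_one: "v 1 = 0"
  using valuation_mult[of 1 1] by simp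

lemma Zp_zero: "0 \<in> Zp v"
  by (simp add: Zp_def)

lemma Zp_one: "1 \<in> Zp v"
  by (simp add: Zp_def valuation_one)

lemma Zp_mult: "x \<in> Zp v \<Longrightarrow> y \<in> Zp v \<Longrightarrow> x * y \<in> Zp v"
  by (cases "x = 0 \<or> y = 0") (auto simp: Zp_def valuation_mult)

lemma Zp_uminus: "x \<in> Zp v \<Longrightarrow> - x \<in> Zp v"
proof -
  have "v (- 1) = 0"
    using valuation_mult[of "- 1" "- 1"] valuation_one by simp
  then have "- 1 \<in> Zp v"
    by (simp add: Zp_def)
  then show "x \<in> Zp v \<Longrightarrow> - x \<in> Zp v"
    using Zp_mult[of "- 1" x] by simp
qed

lemma Zp_add: "x \<in> Zp v \<Longrightarrow> y \<in> Zp v \<Longrightarrow> x + y \<in> Zp v"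
proof (cases "x = 0 \<or> y = 0 \<or> x + y = 0")
  case False
  then have "min (v x) (v y) \<le> v (x + y)"
    using Qp by (simp add: padic_field_def)
  then show "x \<in> Zp v \<Longrightarrow> y \<in> Zp v \<Longrightarrow> x + y \<in> Zp v"
    using False by (auto simp: Zp_def)
qed (auto simp: Zp_def)

lemma Zp_diff: "x \<in> Zp v \<Longrightarrow> y \<in> Zp v \<Longrightarrow> x - y \<in> Zp v"
  using Zp_add[of x "- y"] Zp_uminus[of y] by simp

lemma Zp_sum: "(\<And>i. i \<in> A \<Longrightarrow> F i \<in> Zp v) \<Longrightarrow> (\<Sum>i\<in>A. F i) \<in> Zp v"
  by (induction A rule: infinite_finite_induct) (auto simp: Zp_zero Zp_add)

text \<open>If \<open>2 = 0\<close> then every natural number would be \<open>0\<close> or \<open>1\<close> in the field; neither can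
  be \<open>p\<close>, which has valuation \<open>1\<close>.\<close>

lemma padic_two_neq_zero: "(2::'a) \<noteq> 0"
proof
  assume two: "(2::'a) = 0"
  have "(of_nat p :: 'a) = of_nat (2 * (p div 2) + p mod 2)"
    by simp
  also have "\<dots> = 2 * of_nat (p div 2) + of_nat (p mod 2)"
    by (simp only: of_nat_add of_nat_mult of_nat_numeral)
  finally have "(of_nat p :: 'a) = 2 * of_nat (p div 2) + of_nat (p mod 2)" .
  then have "(of_nat p :: 'a) = of_nat (p mod 2)"
    using two by simp
  moreover have "(of_nat p :: 'a) \<noteq> 0" and "v (of_nat p) = 1"
    using Qp unfolding padic_field_def by blast+
  ultimately show False
    using valuation_one by (cases "p mod 2 = 0") (simp_all add: not_mod_2_eq_1_eq_0)
qed

end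

lemma Zspan_lincomb: "\<forall>i<n. a i \<in> Zp v \<Longrightarrow> (\<Sum>i<n. sc (a i) (b i)) \<in> Zspan v sc b n"
  unfolding Zspan_def by blast

lemma Zspan_imp_Qspan: "x \<in> Zspan v sc b n \<Longrightarrow> x \<in> Qspan sc b n"
  unfolding Zspan_def Qspan_def by blast

context
  fixes p :: nat and v :: "'a::field \<Rightarrow> int" and sc :: "'a \<Rightarrow> 'v::ab_group_add \<Rightarrow> 'v"
  assumes Qp: "padic_field p v" and VS: "vector_space_over sc"
begin

interpretation module sc
  using VS by (simp add: vector_space_over_iff_module)

lemma Zspan_add: "x \<in> Zspan v sc b n \<Longrightarrow> y \<in> Zspan v sc b n \<Longrightarrow> x + y \<in> Zspan v sc b n"
  unfolding Zspan_def by (auto simp: lincomb_add[OF VS] intro!: Zp_add[OF Qp])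

lemma Zspan_scale: "t \<in> Zp v \<Longrightarrow> x \<in> Zspan v sc b n \<Longrightarrow> sc t x \<in> Zspan v sc b n"
  unfolding Zspan_def by (auto simp: lincomb_scale[OF VS] intro!: Zp_mult[OF Qp])

lemma Zspan_diff: "x \<in> Zspan v sc b n \<Longrightarrow> y \<in> Zspan v sc b n \<Longrightarrow> x - y \<in> Zspan v sc b n"
  unfolding Zspan_def by (auto simp: lincomb_diff[OF VS] intro!: Zp_diff[OF Qp])

lemma Zspan_zero: "0 \<in> Zspan v sc b n"
  using Zspan_lincomb[where a = "\<lambda>_. 0" and b = b and n = n and sc = sc] Zp_zero[OF Qp] by simp

lemma Zspan_sum: "(\<And>i. i \<in> A \<Longrightarrow> F i \<in> Zspan v sc b n) \<Longrightarrow> (\<Sum>i\<in>A. F i) \<in> Zspan v sc b n"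
  by (induction A rule: infinite_finite_induct) (auto simp: Zspan_zero Zspan_add)

lemma Zspan_basis: "k < n \<Longrightarrow> b k \<in> Zspan v sc b n"
  using Zspan_lincomb[where a = "\<lambda>i. if i = k then 1 else 0" and b = b and n = n and sc = sc] lincomb_delta[OF VS, of k n b]
    Zp_zero[OF Qp] Zp_one[OF Qp] by simp

lemma Qspan_add: "x \<in> Qspan sc b n \<Longrightarrow> y \<in> Qspan sc b n \<Longrightarrow> x + y \<in> Qspan sc b n"
  unfolding Qspan_def by (auto simp: lincomb_add[OF VS])

lemma Qspan_scale: "x \<in> Qspan sc b n \<Longrightarrow> sc t x \<in> Qspan sc b n"
  unfolding Qspan_def by (auto simp: lincomb_scale[OF VS])

context
  fixes q :: "'v \<Rightarrow> 'a"
  assumes QF: "quadratic_form sc q"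
begin

lemma dual_lattice_add:
  "x \<in> dual_lattice v sc q b n \<Longrightarrow> y \<in> dual_lattice v sc q b n \<Longrightarrow> x + y \<in> dual_lattice v sc q b n"
  unfolding dual_lattice_def using Qspan_add bil_add_left[OF QF] Zp_add[OF Qp] by auto

lemma dual_lattice_scale:
  "t \<in> Zp v \<Longrightarrow> x \<in> dual_lattice v sc q b n \<Longrightarrow> sc t x \<in> dual_lattice v sc q b n"
  unfolding dual_lattice_def using Qspan_scale bil_scale_left[OF QF] Zp_mult[OF Qp] by auto

lemma dual_lattice_zero: "0 \<in> dual_lattice v sc q b n"
  using Zspan_imp_Qspan[OF Zspan_zero] bil_zero_left[OF QF] Zp_zero[OF Qp]
  by (auto simp: dual_lattice_def)

lemma dual_lattice_sum:
  "(\<And>i. i \<in> A \<Longrightarrow> F i \<in> dual_lattice v sc q b n) \<Longrightarrow> (\<Sum>i\<in>A. F i) \<in> dual_lattice v sc q b n"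
  by (induction A rule: infinite_finite_induct) (auto simp: dual_lattice_zero dual_lattice_add)

lemma even_lattice_bil_basis:
  assumes "even_lattice v sc q b n" and "i < n" and "j < n"
  shows "bil q (b i) (b j) \<in> Zp v"
proof -
  have "b i + b j \<in> Zspan v sc b n" "b i \<in> Zspan v sc b n" "b j \<in> Zspan v sc b n"
    using assms(2,3) by (auto intro: Zspan_add Zspan_basis)
  then show ?thesis
    using assms(1) by (auto simp: even_lattice_def bil_def intro!: Zp_diff[OF Qp])
qed

lemma even_lattice_bil:
  assumes even: "even_lattice v sc q b n"
    and "x \<in> Zspan v sc b n" and "y \<in> Zspan v sc b n"
  shows "bil q x y \<in> Zp v"
proof -
  obtain a c where x: "x = (\<Sum>i<n. sc (a i) (b i))" and a: "\<forall>i<n. a i \<in> Zp v"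
    and y: "y = (\<Sum>j<n. sc (c j) (b j))" and c: "\<forall>j<n. c j \<in> Zp v"
    using assms(2,3) unfolding Zspan_def by blast
  have "bil q x y = (\<Sum>j<n. c j * (\<Sum>i<n. a i * bil q (b i) (b j)))"
    unfolding x y by (simp add: bil_lincomb_left[OF QF] bil_lincomb_right[OF QF])
  also have "\<dots> \<in> Zp v"
    using a c even_lattice_bil_basis[OF even]
    by (intro Zp_sum[OF Qp] Zp_mult[OF Qp]) auto
  finally show ?thesis .
qed

lemma even_lattice_subset_dual:
  "even_lattice v sc q b n \<Longrightarrow> Zspan v sc b n \<subseteq> dual_lattice v sc q b n"
  using even_lattice_bil Zspan_imp_Qspan by (auto simp: dual_lattice_def)

lemma dual_lattice_coset:
  assumes "even_lattice v sc q b n" and "y \<in> dual_lattice v sc q b n" and "x - y \<in> Zspan v sc b n"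
  shows "x \<in> dual_lattice v sc q b n"
  using dual_lattice_add[OF assms(2) even_lattice_subset_dual[OF assms(1), THEN subsetD, OF assms(3)]]
  by simp

end

end

section \<open>Extending a map on a basis\<close>

text \<open>The coefficients are chosen by \<open>SOME\<close>; they are only meaningful on the span of \<open>e\<close>.\<close>

definition basis_extension ::
    "('a::field \<Rightarrow> 'w::ab_group_add \<Rightarrow> 'w) \<Rightarrow> (nat \<Rightarrow> 'w) \<Rightarrow> nat
     \<Rightarrow> ('a \<Rightarrow> 'v::ab_group_add \<Rightarrow> 'v) \<Rightarrow> (nat \<Rightarrow> 'v) \<Rightarrow> 'w \<Rightarrow> 'v" where
  "basis_extension scM e r scL u x =
     (\<Sum>i<r. scL ((SOME a. x = (\<Sum>j<r. scM (a j) (e j))) i) (u i))"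

context
  fixes scM :: "'a::field \<Rightarrow> 'w::ab_group_add \<Rightarrow> 'w" and e :: "nat \<Rightarrow> 'w" and r :: nat
    and scL :: "'a \<Rightarrow> 'v::ab_group_add \<Rightarrow> 'v" and u :: "nat \<Rightarrow> 'v"
  assumes VM: "vector_space_over scM" and VL: "vector_space_over scL"
    and independent: "\<forall>a. (\<Sum>i<r. scM (a i) (e i)) = 0 \<longrightarrow> (\<forall>i<r. a i = 0)"
begin

lemma basis_extension_lincomb:
  "basis_extension scM e r scL u (\<Sum>i<r. scM (a i) (e i)) = (\<Sum>i<r. scL (a i) (u i))"
proof -
  let ?x = "\<Sum>i<r. scM (a i) (e i)"
  have some: "?x = (\<Sum>i<r. scM ((SOME a. ?x = (\<Sum>j<r. scM (a j) (e j))) i) (e i))"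
    by (rule someI[where x = a]) simp
  have "\<forall>i<r. (SOME a. ?x = (\<Sum>j<r. scM (a j) (e j))) i = a i"
    using lincomb_unique[OF VM independent some] by simp
  then show ?thesis
    unfolding basis_extension_def by (intro sum.cong) auto
qed

lemma basis_extension_basis: "i < r \<Longrightarrow> basis_extension scM e r scL u (e i) = u i"
  using basis_extension_lincomb[of "\<lambda>j. if j = i then 1 else 0"]
  by (simp add: lincomb_delta[OF VM] lincomb_delta[OF VL])

lemma bil_basis_extension_lincomb:
  fixes qM :: "'w \<Rightarrow> 'a" and qL :: "'v \<Rightarrow> 'a"
  assumes qM: "quadratic_form scM qM" and qL: "quadratic_form scL qL"
    and gram: "\<forall>i<r. \<forall>k<r. bil qL (u i) (u k) = bil qM (e i) (e k)"
  shows "bil qL (basis_extension scM e r scL u (\<Sum>i<r. scM (a i) (e i)))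
                (basis_extension scM e r scL u (\<Sum>i<r. scM (c i) (e i)))
         = bil qM (\<Sum>i<r. scM (a i) (e i)) (\<Sum>i<r. scM (c i) (e i))"
  using gram
  by (simp add: basis_extension_lincomb bil_lincomb_left[OF qL] bil_lincomb_right[OF qL]
      bil_lincomb_left[OF qM] bil_lincomb_right[OF qM])

text \<open>Injectivity needs the nondegeneracy of the form on \<open>M \<otimes> \<rat>\<^sub>p\<close>, not just on \<open>M\<close>:
  if \<open>x\<close> and \<open>y\<close> have the same image, \<open>x - y\<close> is orthogonal to every \<open>\<rat>\<^sub>p\<close>-combination
  of the \<open>e i\<close>.\<close>

lemma inj_on_basis_extension:
  fixes qM :: "'w \<Rightarrow> 'a" and qL :: "'v \<Rightarrow> 'a"
  assumes qM: "quadratic_form scM qM" and qL: "quadratic_form scL qL"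
    and gram: "\<forall>i<r. \<forall>k<r. bil qL (u i) (u k) = bil qM (e i) (e k)"
    and nondegenerate: "\<forall>x\<in>Qspan scM e r. (\<forall>y\<in>Qspan scM e r. bil qM x y = 0) \<longrightarrow> x = 0"
  shows "inj_on (basis_extension scM e r scL u) (Qspan scM e r)"
proof (rule inj_onI)
  let ?\<phi> = "basis_extension scM e r scL u"
  fix x y assume "x \<in> Qspan scM e r" "y \<in> Qspan scM e r" and eq: "?\<phi> x = ?\<phi> y"
  then obtain a c where x: "x = (\<Sum>i<r. scM (a i) (e i))" and y: "y = (\<Sum>i<r. scM (c i) (e i))"
    unfolding Qspan_def by blast
  have diff: "x - y = (\<Sum>i<r. scM (a i - c i) (e i))"
    unfolding x y by (rule lincomb_diff[OF VM])
  have "?\<phi> (x - y) = (\<Sum>i<r. scL (a i - c i) (u i))"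
    unfolding diff by (rule basis_extension_lincomb)
  also have "\<dots> = ?\<phi> x - ?\<phi> y"
    unfolding x y basis_extension_lincomb by (rule lincomb_diff[OF VL, symmetric])
  finally have "?\<phi> (x - y) = 0"
    using eq by simp
  then have "bil qM (x - y) z = 0" if "z \<in> Qspan scM e r" for z
    using that bil_basis_extension_lincomb[OF qM qL gram, of "\<lambda>i. a i - c i"] bil_zero_left[OF qL]
    by (auto simp: Qspan_def diff)
  moreover have "x - y \<in> Qspan scM e r"
    unfolding diff Qspan_def by (auto intro!: exI[of _ "\<lambda>i. a i - c i"])
  ultimately have "x - y = 0"
    using nondegenerate by blast
  then show "x = y"
    by simp
qed

end

theorem isometric_embedding_basis_extension:
  fixes scM :: "'a::field \<Rightarrow> 'w::ab_group_add \<Rightarrow> 'w" and qM :: "'w \<Rightarrow> 'a"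
    and scL :: "'a \<Rightarrow> 'v::ab_group_add \<Rightarrow> 'v" and qL :: "'v \<Rightarrow> 'a"
  assumes Qp: "padic_field p v"
    and VM: "vector_space_over scM" and qM: "quadratic_form scM qM"
    and VL: "vector_space_over scL" and qL: "quadratic_form scL qL"
    and M: "is_lattice v scM qM e r"
    and u: "\<forall>i<r. u i \<in> dual_lattice v scL qL b n"
    and gram: "\<forall>i<r. \<forall>k<r. bil qL (u i) (u k) = bil qM (e i) (e k)"
  shows "isometric_embedding v scM qM (Zspan v scM e r) scL qL (dual_lattice v scL qL b n)
           (basis_extension scM e r scL u)"
proof -
  have independent: "\<forall>a. (\<Sum>i<r. scM (a i) (e i)) = 0 \<longrightarrow> (\<forall>i<r. a i = 0)"
    using M by (simp add: is_lattice_def)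
  let ?\<phi> = "basis_extension scM e r scL u"
  note \<phi>_lincomb = basis_extension_lincomb[OF VM VL independent]
  note \<phi>_bil = bil_basis_extension_lincomb[OF VM VL independent qM qL gram]
  have two: "(2::'a) \<noteq> 0"
    by (rule padic_two_neq_zero[OF Qp])
  show ?thesis
    unfolding isometric_embedding_def
  proof (intro conjI ballI)
    fix x assume "x \<in> Zspan v scM e r"
    then obtain a where x: "x = (\<Sum>i<r. scM (a i) (e i))" and a: "\<forall>i<r. a i \<in> Zp v"
      unfolding Zspan_def by blast
    show "?\<phi> x \<in> dual_lattice v scL qL b n"
      unfolding x \<phi>_lincomb using a u
      by (intro dual_lattice_sum[OF Qp VL qL] dual_lattice_scale[OF Qp VL qL]) auto
    show "qL (?\<phi> x) = qM x"
      using \<phi>_bil[of a a]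
      by (simp add: x quadratic_form_half_bil[OF qL VL two] quadratic_form_half_bil[OF qM VM two])
  next
    fix x y assume "x \<in> Zspan v scM e r" "y \<in> Zspan v scM e r"
    then obtain a c where "x = (\<Sum>i<r. scM (a i) (e i))" "y = (\<Sum>i<r. scM (c i) (e i))"
      unfolding Zspan_def by blast
    then show "?\<phi> (x + y) = ?\<phi> x + ?\<phi> y"
      by (simp add: lincomb_add[OF VM] lincomb_add[OF VL] \<phi>_lincomb)
  next
    fix t x assume "t \<in> Zp v" "x \<in> Zspan v scM e r"
    then obtain a where "x = (\<Sum>i<r. scM (a i) (e i))"
      unfolding Zspan_def by blast
    then show "?\<phi> (scM t x) = scL t (?\<phi> x)"
      by (simp add: lincomb_scale[OF VM] lincomb_scale[OF VL] \<phi>_lincomb)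
  next
    show "inj_on ?\<phi> (Zspan v scM e r)"
      using inj_on_basis_extension[OF VM VL independent qM qL gram] M
      by (auto simp: is_lattice_def intro: inj_on_subset Zspan_imp_Qspan)
  qed
qed

section \<open>Hyperbolic pairs\<close>

definition hyperbolic_pairs ::
    "('v::ab_group_add \<Rightarrow> 'a::field) \<Rightarrow> nat \<Rightarrow> (nat \<Rightarrow> 'v) \<Rightarrow> (nat \<Rightarrow> 'v) \<Rightarrow> bool" where
  "hyperbolic_pairs q r f f' \<longleftrightarrow>
     (\<forall>i<r. \<forall>j<r. bil q (f i) (f j) = 0 \<and> bil q (f' i) (f' j) = 0 \<and>
                  bil q (f i) (f' j) = (if i = j then 1 else 0))"

text \<open>The coefficient of \<open>f j\<close> in the orthogonal projection is read off by pairing with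
  \<open>f' j\<close>, and vice versa.\<close>

definition hyperbolic_projection ::
    "('a::field \<Rightarrow> 'v::ab_group_add \<Rightarrow> 'v) \<Rightarrow> ('v \<Rightarrow> 'a) \<Rightarrow> nat \<Rightarrow> (nat \<Rightarrow> 'v) \<Rightarrow> (nat \<Rightarrow> 'v)
     \<Rightarrow> 'v \<Rightarrow> 'v" where
  "hyperbolic_projection sc q r f f' x =
     (\<Sum>j<r. sc (bil q x (f' j)) (f j)) + (\<Sum>j<r. sc (bil q x (f j)) (f' j))"

definition hyperbolic_bil ::
    "('v::ab_group_add \<Rightarrow> 'a::field) \<Rightarrow> nat \<Rightarrow> (nat \<Rightarrow> 'v) \<Rightarrow> (nat \<Rightarrow> 'v) \<Rightarrow> 'v \<Rightarrow> 'v \<Rightarrow> 'a" where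
  "hyperbolic_bil q r f f' x y =
     (\<Sum>j<r. bil q x (f' j) * bil q y (f j) + bil q x (f j) * bil q y (f' j))"

lemma hyperbolic_bil_commute: "hyperbolic_bil q r f f' y x = hyperbolic_bil q r f f' x y"
  by (simp add: hyperbolic_bil_def add.commute mult.commute)

lemma hyperbolic_bil_in_Zp:
  assumes Qp: "padic_field p v"
    and x: "\<forall>j<r. bil q x (f j) \<in> Zp v \<and> bil q x (f' j) \<in> Zp v"
    and y: "\<forall>j<r. bil q y (f j) \<in> Zp v \<and> bil q y (f' j) \<in> Zp v"
  shows "hyperbolic_bil q r f f' x y \<in> Zp v"
  unfolding hyperbolic_bil_def using x y
  by (intro Zp_sum[OF Qp] Zp_add[OF Qp] Zp_mult[OF Qp]) auto

lemma hyperbolic_bil_diag_half_in_Zp: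
  assumes Qp: "padic_field p v"
    and x: "\<forall>j<r. bil q x (f j) \<in> Zp v \<and> bil q x (f' j) \<in> Zp v"
  shows "hyperbolic_bil q r f f' x x / 2 \<in> Zp v"
proof -
  have "hyperbolic_bil q r f f' x x = 2 * (\<Sum>j<r. bil q x (f' j) * bil q x (f j))"
    by (simp add: hyperbolic_bil_def mult.commute sum_distrib_left)
  then have "hyperbolic_bil q r f f' x x / 2 = (\<Sum>j<r. bil q x (f' j) * bil q x (f j))"
    using padic_two_neq_zero[OF Qp] by simp
  also have "\<dots> \<in> Zp v"
    using x by (intro Zp_sum[OF Qp] Zp_mult[OF Qp]) auto
  finally show ?thesis .
qed

context
  fixes sc :: "'a::field \<Rightarrow> 'v::ab_group_add \<Rightarrow> 'v" and q :: "'v \<Rightarrow> 'a"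
    and r :: nat and f f' :: "nat \<Rightarrow> 'v"
  assumes QF: "quadratic_form sc q" and pairs: "hyperbolic_pairs q r f f'"
begin

lemma bil_f_f: "i < r \<Longrightarrow> j < r \<Longrightarrow> bil q (f i) (f j) = 0"
  and bil_f'_f': "i < r \<Longrightarrow> j < r \<Longrightarrow> bil q (f' i) (f' j) = 0"
  and bil_f_f': "i < r \<Longrightarrow> j < r \<Longrightarrow> bil q (f i) (f' j) = (if i = j then 1 else 0)"
  and bil_f'_f: "i < r \<Longrightarrow> j < r \<Longrightarrow> bil q (f' j) (f i) = (if i = j then 1 else 0)"
  using pairs by (simp_all add: hyperbolic_pairs_def bil_sym[of q "f' j"])

lemma bil_hyperbolic_projection:
  "bil q (hyperbolic_projection sc q r f f' x) y = hyperbolic_bil q r f f' x y"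
  by (simp add: hyperbolic_projection_def hyperbolic_bil_def bil_add_left[OF QF]
      bil_lincomb_left[OF QF] sum.distrib bil_sym[of q "f _" y] bil_sym[of q "f' _" y])

lemma bil_hyperbolic_residual_f:
  "k < r \<Longrightarrow> bil q (x - hyperbolic_projection sc q r f f' x) (f k) = 0"
  by (simp add: bil_diff_left[OF QF] bil_hyperbolic_projection hyperbolic_bil_def
      bil_f_f bil_f_f' sum_mult_delta)

lemma bil_hyperbolic_residual_f':
  "k < r \<Longrightarrow> bil q (x - hyperbolic_projection sc q r f f' x) (f' k) = 0"
  by (simp add: bil_diff_left[OF QF] bil_hyperbolic_projection hyperbolic_bil_def
      bil_f'_f' bil_f'_f sum_mult_delta)

lemma bil_hyperbolic_residual:
  "bil q (x - hyperbolic_projection sc q r f f' x) (y - hyperbolic_projection sc q r f f' y) =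
     bil q x y - hyperbolic_bil q r f f' x y"
proof -
  have "bil q (x - hyperbolic_projection sc q r f f' x) (hyperbolic_projection sc q r f f' y) = 0"
    by (simp add: hyperbolic_projection_def[where x = y] bil_add_right[OF QF]
        bil_lincomb_right[OF QF] bil_hyperbolic_residual_f bil_hyperbolic_residual_f')
  then show ?thesis
    by (simp add: bil_diff_right[OF QF] bil_diff_left[OF QF] bil_hyperbolic_projection)
qed

lemma bil_hyperbolic_shift:
  assumes h: "\<forall>i<r. \<forall>k<r. bil q (h i) (f k) = 0 \<and> bil q (h i) (f' k) = 0"
    and "i < r" and "k < r"
  shows "bil q (h i + f i + (\<Sum>j<r. sc (b i j) (f' j))) (h k + f k + (\<Sum>j<r. sc (b k j) (f' j)))
         = bil q (h i) (h k) + b i k + b k i"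
proof -
  have h': "bil q (f j) (h l) = 0" "bil q (f' j) (h l) = 0" if "j < r" "l < r" for j l
    using h that by (simp_all add: bil_sym[of q _ "h l"])
  show ?thesis
    using assms h'
    by (simp add: bil_add_left[OF QF] bil_add_right[OF QF] bil_lincomb_left[OF QF]
        bil_lincomb_right[OF QF] bil_f_f bil_f'_f' bil_f_f' bil_f'_f sum_mult_delta)
qed

end

lemma in_Lambda_sym: "in_Lambda v r A \<Longrightarrow> i < r \<Longrightarrow> j < r \<Longrightarrow> A j i = A i j"
  unfolding in_Lambda_def by metis

lemma in_Lambda_diag: "in_Lambda v r A \<Longrightarrow> i < r \<Longrightarrow> A i i \<in> Zp v"
  unfolding in_Lambda_def by metis

lemma in_Lambda_off_diag: "in_Lambda v r A \<Longrightarrow> i < r \<Longrightarrow> j < r \<Longrightarrow> i \<noteq> j \<Longrightarrow> 2 * A i j \<in> Zp v"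
  unfolding in_Lambda_def by metis

definition upper_half :: "(nat \<Rightarrow> nat \<Rightarrow> 'a::field) \<Rightarrow> nat \<Rightarrow> nat \<Rightarrow> 'a" where
  "upper_half T i k = (if i = k then T i i / 2 else if i < k then T i k else 0)"

lemma upper_half_add_transpose:
  fixes T :: "nat \<Rightarrow> nat \<Rightarrow> 'a::field"
  assumes "T k i = T i k" and "(2::'a) \<noteq> 0"
  shows "upper_half T i k + upper_half T k i = T i k"
proof (cases "i = k")
  case True
  then show ?thesis
    using assms(2) by (simp add: upper_half_def field_simps)
next
  case False
  then show ?thesis
    using assms(1) by (auto simp: upper_half_def)
qed

lemma upper_half_in_Zp:
  assumes Qp: "padic_field p v" and D: "in_Lambda v r D"
    and S: "\<forall>i<r. \<forall>k<r. S i k \<in> Zp v" and S_diag: "\<forall>i<r. S i i / 2 \<in> Zp v"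
    and i: "i < r" and k: "k < r"
  shows "upper_half (\<lambda>i k. 2 * D i k + S i k) i k \<in> Zp v"
proof (cases "i = k")
  case True
  have "upper_half (\<lambda>i k. 2 * D i k + S i k) i k = D i i + S i i / 2"
    using True padic_two_neq_zero[OF Qp] by (simp add: upper_half_def add_divide_distrib)
  then show ?thesis
    using in_Lambda_diag[OF D i] S_diag i by (simp add: Zp_add[OF Qp])
next
  case False
  then show ?thesis
    using in_Lambda_off_diag[OF D i k] S i k
    by (auto simp: upper_half_def intro!: Zp_add[OF Qp] Zp_zero[OF Qp])
qed

section \<open>Lifting \<open>\<gamma>\<close> to vectors with the prescribed Gram matrix\<close>

lemma hyperbolic_lift:
  fixes sc :: "'a::field \<Rightarrow> 'v::ab_group_add \<Rightarrow> 'v" and q :: "'v \<Rightarrow> 'a"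
    and G :: "nat \<Rightarrow> nat \<Rightarrow> 'a" and g f f' :: "nat \<Rightarrow> 'v"
  assumes Qp: "padic_field p v" and VS: "vector_space_over sc" and QF: "quadratic_form sc q"
    and pairs: "hyperbolic_pairs q r f f'"
    and pairs_in_L: "\<forall>j<r. f j \<in> Zspan v sc b n \<and> f' j \<in> Zspan v sc b n"
    and g: "\<forall>i<r. g i \<in> dual_lattice v sc q b n"
    and G: "in_Lambda v r (\<lambda>i k. G i k / 2 - moment q g i k)"
  shows "\<exists>u. \<forall>i<r. u i - g i \<in> Zspan v sc b n \<and> (\<forall>k<r. bil q (u i) (u k) = G i k)"
proof -
  let ?P = "hyperbolic_projection sc q r f f'"
  define S where "S = (\<lambda>i k. hyperbolic_bil q r f f' (g i) (g k))"
  define D where "D = (\<lambda>i k. G i k / 2 - moment q g i k)"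
  define T where "T = (\<lambda>i k. 2 * D i k + S i k)"
  define u where "u i = (g i - ?P (g i)) + f i + (\<Sum>j<r. sc (upper_half T i j) (f' j))" for i
  have two: "(2::'a) \<noteq> 0"
    by (rule padic_two_neq_zero[OF Qp])
  have coeff: "\<forall>j<r. bil q (g i) (f j) \<in> Zp v \<and> bil q (g i) (f' j) \<in> Zp v" if "i < r" for i
    using g pairs_in_L that by (auto simp: dual_lattice_def)
  have S_Zp: "\<forall>i<r. \<forall>k<r. S i k \<in> Zp v"
    by (simp add: S_def hyperbolic_bil_in_Zp[OF Qp] coeff)
  have S_diag: "\<forall>i<r. S i i / 2 \<in> Zp v"
    by (simp add: S_def hyperbolic_bil_diag_half_in_Zp[OF Qp] coeff)
  have T_sym: "T k i = T i k" if "i < r" "k < r" for i k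
    using in_Lambda_sym[OF G[folded D_def] that] hyperbolic_bil_commute[of q r f f' "g i" "g k"]
    by (simp add: T_def S_def)
  have gram: "bil q (u i) (u k) = G i k" if "i < r" "k < r" for i k
  proof -
    have "bil q (u i) (u k) =
        bil q (g i - ?P (g i)) (g k - ?P (g k)) + upper_half T i k + upper_half T k i"
      unfolding u_def using that
      by (intro bil_hyperbolic_shift[OF QF pairs])
        (simp_all add: bil_hyperbolic_residual_f[OF QF pairs] bil_hyperbolic_residual_f'[OF QF pairs])
    also have "\<dots> = bil q (g i - ?P (g i)) (g k - ?P (g k)) + T i k"
      using upper_half_add_transpose[where T = T, OF T_sym[OF that] two] by (simp add: add.assoc)
    also have "\<dots> = G i k"
      using two by (simp add: bil_hyperbolic_residual[OF QF pairs] T_def D_def S_def moment_def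
          field_simps)
    finally show ?thesis .
  qed
  have "u i - g i \<in> Zspan v sc b n" if "i < r" for i
  proof -
    have "u i - g i = f i + (\<Sum>j<r. sc (upper_half T i j) (f' j)) - ?P (g i)"
      by (simp add: u_def algebra_simps)
    moreover have "upper_half T i j \<in> Zp v" if "j < r" for j
      unfolding T_def using upper_half_in_Zp[OF Qp G[folded D_def] S_Zp S_diag \<open>i < r\<close> that] .
    ultimately show ?thesis
      using that coeff pairs_in_L unfolding hyperbolic_projection_def
      by (auto intro!: Zspan_diff[OF Qp VS] Zspan_add[OF Qp VS] Zspan_sum[OF Qp VS]
          Zspan_scale[OF Qp VS])
  qed
  with gram show ?thesis
    by blast
qed

lemma hypfam_pairs_in_Zspan:
  assumes Qp: "padic_field p v" and VS: "vector_space_over sc"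
  shows "\<forall>j<r. f j \<in> Zspan v sc (hypfam r f f' c) (2 * r + m) \<and>
                f' j \<in> Zspan v sc (hypfam r f f' c) (2 * r + m)"
proof (intro allI impI conjI)
  fix j assume "j < r"
  then show "f j \<in> Zspan v sc (hypfam r f f' c) (2 * r + m)"
    using Zspan_basis[OF Qp VS, of j "2 * r + m" "hypfam r f f' c"] by (simp add: hypfam_def)
  show "f' j \<in> Zspan v sc (hypfam r f f' c) (2 * r + m)"
    using Zspan_basis[OF Qp VS, of "r + j" "2 * r + m" "hypfam r f f' c"] \<open>j < r\<close>
    by (simp add: hypfam_def)
qed

theorem mainTheorem5:
  fixes p :: nat and v :: "'a::field \<Rightarrow> int"
    and scL :: "'a \<Rightarrow> 'v::ab_group_add \<Rightarrow> 'v" and qL :: "'v \<Rightarrow> 'a"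
    and scM :: "'a \<Rightarrow> 'w::ab_group_add \<Rightarrow> 'w" and qM :: "'w \<Rightarrow> 'a"
    and r m :: nat and f f' c :: "nat \<Rightarrow> 'v"
    and e :: "nat \<Rightarrow> 'w" and g :: "nat \<Rightarrow> 'v"
  assumes Qp: "padic_field p v"
    and r: "1 \<le> r"
    and VL: "vector_space_over scL" and qL: "quadratic_form scL qL"
    and VM: "vector_space_over scM" and qM: "quadratic_form scM qM"
    and Ltil: "is_lattice v scL qL c m" "even_lattice v scL qL c m"
    and L: "is_lattice v scL qL (hypfam r f f' c) (2 * r + m)"
           "even_lattice v scL qL (hypfam r f f' c) (2 * r + m)"
    and split: "hyperbolic_frame qL r f f' c m"
    and M: "is_lattice v scM qM e r"
    and gamma: "\<forall>i<r. g i \<in> dual_lattice v scL qL (hypfam r f f' c) (2 * r + m)"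
    and moments: "in_Lambda v r (\<lambda>i j. moment qM e i j - moment qL g i j)"
  shows "\<exists>\<phi>. isometric_embedding v scM qM (Zspan v scM e r) scL qL
                 (dual_lattice v scL qL (hypfam r f f' c) (2 * r + m)) \<phi> \<and>
             (\<forall>i<r. \<phi> (e i) - g i \<in> Zspan v scL (hypfam r f f' c) (2 * r + m))"
proof -
  let ?B = "hypfam r f f' c" and ?N = "2 * r + m"
  have pairs: "hyperbolic_pairs qL r f f'"
    using split by (simp add: hyperbolic_frame_def hyperbolic_pairs_def)
  have target: "in_Lambda v r (\<lambda>i k. bil qM (e i) (e k) / 2 - moment qL g i k)"
    using moments by (simp add: moment_def)
  obtain u where u: "\<forall>i<r. u i - g i \<in> Zspan v scL ?B ?N \<and>
      (\<forall>k<r. bil qL (u i) (u k) = bil qM (e i) (e k))"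
    using hyperbolic_lift[OF Qp VL qL pairs hypfam_pairs_in_Zspan[OF Qp VL] gamma target] by blast
  have "u i \<in> dual_lattice v scL qL ?B ?N" if "i < r" for i
    using dual_lattice_coset[OF Qp VL qL L(2)] gamma u that by blast
  then have "isometric_embedding v scM qM (Zspan v scM e r) scL qL (dual_lattice v scL qL ?B ?N)
      (basis_extension scM e r scL u)"
    using u by (intro isometric_embedding_basis_extension[OF Qp VM qM VL qL M]) simp_all
  moreover have "basis_extension scM e r scL u (e i) = u i" if "i < r" for i
    using basis_extension_basis[OF VM VL _ that] M by (simp add: is_lattice_def)
  ultimately show ?thesis
    using u by (intro exI[of _ "basis_extension scM e r scL u"]) simp
qed

end
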